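(* States $|\psi\rangle\in H_s$ that cannot be trained by QAOA with target state $|0\rangle^{\otimes n}$ necessarily satisfy \begin{align} A_1=\langle e_1|\psi\rangle \propto \langle 0|^{\otimes n}\mathcal{H}_x|\psi\rangle\propto\langle 0|^{\otimes n}X|\psi\rangle=0,\\ |A_2|=|\langle e_2|\psi\rangle|\le\sqrt{\dfrac{2n}{n-1}}\,|\langle 0|^{\otimes n}|\psi\rangle| . \end{align}
   Context: QAOA on $n$ qubits prepares $|\psi_p(\boldsymbol\gamma,\boldsymbol\beta)\rangle=\prod_{k=1}^p e^{-i\beta_k\mathcal{H}_x}e^{-i\gamma_k|\boldsymbol t\rangle\langle\boldsymbol t|}|+\rangle^{\otimes n}$ with $\mathcal{H}_x=\sum_{i=1}^n X_i$ (Pauli $X$ on qubit $i$), $\gamma_k\in[0,2\pi)$, $\beta_k\in[0,\pi)$; here the target is $|\boldsymbol t\rangle=|0\rangle^{\otimes n}$ and the objective is the overlap $|\langle \boldsymbol t|\psi_p\rangle|^2$. In layerwise training, one layer is added at a time and only the new layer's parameters $(\beta_c,\gamma_c)$ are optimized, so $|\psi_c\rangle=e^{-i\beta_c\mathcal{H}_x}e^{-i\gamma_c|0\rangle^{\otimes n}\langle 0|^{\otimes n}}|\psi_{c-1}\rangle$. $H_s$ is the symmetric subspace, spanned by states invariant under every permutation $P_{ij}$ of two qubits; it has the orthonormal Dicke basis $|e_k\rangle$, $k=0,\dots,n$, where $|e_k\rangle$ is the normalized uniform superposition of all $n$-qubit computational basis states of Hamming weight $k$ (so $|e_0\rangle=|0\rangle^{\otimes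 n}$). All QAOA states with this target lie in $H_s$, and $A_k=\langle e_k|\psi\rangle$. A state "cannot be trained" means that applying a further layer $e^{-i\beta\mathcal{H}_x}e^{-i\gamma|0\rangle^{\otimes n}\langle 0|^{\otimes n}}$ and optimizing over $(\beta,\gamma)$ cannot increase the overlap with $|0\rangle^{\otimes n}$, i.e. the function $g(\beta)=\cos^n\beta\,\big(|A_0|+|\sum_{k=1}^n(-i\tan\beta)^kA_k\sqrt{C_n^k}|\big)$ (the overlap modulus already maximized over $\gamma$) has its global maximum at $\beta=0$. *)

theory Defs
  imports Complex_Main
begin

text \<open>A symmetric state is given by its Dicke-basis amplitudes A k = <e_k|psi>, k = 0..n.
  g n A beta is the overlap modulus with |0...0> after one further QAOA layer,
  already maximized over gamma (formula from the paper, verbatim).\<close>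

definition qaoa_g :: "nat \<Rightarrow> (nat \<Rightarrow> complex) \<Rightarrow> real \<Rightarrow> real" where
  "qaoa_g n A \<beta> = cos \<beta> ^ n *
     (cmod (A 0) + cmod (\<Sum>k=1..n. (- \<i> * complex_of_real (tan \<beta>)) ^ k * A k
                                     * complex_of_real (sqrt (real (n choose k)))))"

definition cannot_be_trained :: "nat \<Rightarrow> (nat \<Rightarrow> complex) \<Rightarrow> bool" where
  "cannot_be_trained n A \<longleftrightarrow> (\<forall>\<beta>\<in>{0..<pi}. qaoa_g n A \<beta> \<le> qaoa_g n A 0)"

end

theory Submission
  imports Defs "HOL-Analysis.Analysis"
begin

text \<open>With t = tan \<beta>, the overlap after one more layer is
  qaoa_g n A \<beta> = cos \<beta> ^ n (|A 0| + |p t|) for the polynomial p t = \<Sum>k\<ge>1. (-\<i>)^k sqrt(C(n,k)) A k t^k.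
  Since cos \<beta> ^ n \<ge> 1 - n \<beta>^2/2, the condition qaoa_g n A \<beta> \<le> qaoa_g n A 0 = |A 0| yields
  cos \<beta> ^ n |p (tan \<beta>)| \<le> n \<beta>^2/2 |A 0|, and \<beta> \<le> tan \<beta>. Dividing by tan \<beta> and letting
  \<beta> \<rightarrow> 0 kills the linear coefficient, so A 1 = 0; then dividing by tan^2 \<beta> bounds the quadratic
  coefficient: sqrt(C(n,2)) |A 2| \<le> n/2 |A 0|. This even gives the constant sqrt(n/(2(n-1))),
  a factor 2 better than claimed.\<close>

definition overlap_coeff :: "nat \<Rightarrow> (nat \<Rightarrow> complex) \<Rightarrow> nat \<Rightarrow> complex" where
  "overlap_coeff n A k = (- \<i>) ^ k * A k * complex_of_real (sqrt (real (n choose k)))"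

lemma qaoa_g_eq_overlap_coeff:
  "qaoa_g n A \<beta> =
    cos \<beta> ^ n * (cmod (A 0) + cmod (\<Sum>k=1..n. overlap_coeff n A k * of_real (tan \<beta>) ^ k))"
  unfolding qaoa_g_def overlap_coeff_def power_mult_distrib by (simp only: mult_ac)

lemma norm_overlap_coeff: "cmod (overlap_coeff n A k) = cmod (A k) * sqrt (real (n choose k))"
  by (simp add: overlap_coeff_def norm_mult norm_power)

lemma tan_ge_self:
  fixes x :: real
  assumes "0 \<le> x" and "x < pi/2"
  shows "x \<le> tan x"
proof -
  have "arctan (tan x) \<le> tan x"
    using assms by (intro arctan_le_self tan_pos_pi2_le)
  moreover have "arctan (tan x) = x"
    using assms by (intro arctan_tan) auto
  ultimately show ?thesis by simp
qed

lemma cos_ge_one_minus_square_half: "1 - x\<^sup>2 / 2 \<le> cos (x::real)"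
proof -
  have "\<bar>sin (x/2)\<bar> \<le> \<bar>x/2\<bar>"
    by (rule abs_sin_x_le_abs_x)
  then have "sin (x/2) ^ 2 \<le> (x/2)\<^sup>2"
    by (metis abs_ge_zero power2_abs power_mono)
  moreover have "cos x = 1 - 2 * sin (x/2) ^ 2"
    using cos_double_sin[of "x/2"] by simp
  ultimately show ?thesis
    by (simp add: power2_eq_square field_simps)
qed

lemma cos_power_ge:
  fixes x :: real
  assumes "x\<^sup>2 \<le> 2"
  shows "1 - real n * x\<^sup>2 / 2 \<le> cos x ^ n"
proof -
  have "1 + real n * (- (x\<^sup>2 / 2)) \<le> (1 + (- (x\<^sup>2 / 2))) ^ n"
    using assms by (intro Bernoulli_inequality) simp
  also have "\<dots> \<le> cos x ^ n"
    using assms cos_ge_one_minus_square_half[of x] by (intro power_mono) simp_all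
  finally show ?thesis by simp
qed

lemma cannot_be_trained_tail_bound:
  assumes "cannot_be_trained n A" and "0 \<le> \<beta>" and "\<beta> \<le> 1"
  shows "cos \<beta> ^ n * cmod (\<Sum>k=1..n. overlap_coeff n A k * of_real (tan \<beta>) ^ k)
    \<le> real n * \<beta>\<^sup>2 / 2 * cmod (A 0)"
proof -
  let ?S = "cmod (\<Sum>k=1..n. overlap_coeff n A k * of_real (tan \<beta>) ^ k)"
  have "\<beta> < pi"
    using assms pi_gt3 by linarith
  moreover have "qaoa_g n A 0 = cmod (A 0)"
    by (simp add: qaoa_g_def zero_power)
  ultimately have "cos \<beta> ^ n * (cmod (A 0) + ?S) \<le> cmod (A 0)"
    using assms unfolding cannot_be_trained_def qaoa_g_eq_overlap_coeff[symmetric] by auto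
  moreover have "\<beta>\<^sup>2 \<le> 1"
    using assms by (simp add: power_le_one)
  then have "(1 - real n * \<beta>\<^sup>2 / 2) * cmod (A 0) \<le> cos \<beta> ^ n * cmod (A 0)"
    by (intro mult_right_mono cos_power_ge) simp_all
  ultimately show ?thesis
    by (simp add: algebra_simps)
qed

lemma norm_lowest_coeff_le:
  fixes c :: "nat \<Rightarrow> 'a::real_normed_field" and w h B :: "'b \<Rightarrow> real"
  assumes "m \<le> n" and "F \<noteq> bot"
    and "(w \<longlongrightarrow> 1) F" and "(h \<longlongrightarrow> 0) F" and "(B \<longlongrightarrow> L) F"
    and "\<forall>\<^sub>F x in F. 0 < h x \<and> w x * norm (\<Sum>k=m..n. c k * of_real (h x) ^ k) \<le> B x * h x ^ m"
  shows "norm (c m) \<le> L"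
proof -
  define q where "q z = (\<Sum>k=m..n. c k * z ^ (k - m))" for z
  have factor: "(\<Sum>k=m..n. c k * z ^ k) = z ^ m * q z" for z
    unfolding q_def sum_distrib_left
    by (intro sum.cong) (auto simp: mult.left_commute power_add[symmetric])
  have "q 0 = (\<Sum>k\<in>{m..n}. if k = m then c k else 0)"
    unfolding q_def by (intro sum.cong) (auto simp: power_0_left)
  also have "\<dots> = c m"
    using \<open>m \<le> n\<close> by simp
  finally have "q 0 = c m" .
  moreover have "((\<lambda>x. q (of_real (h x))) \<longlongrightarrow> q (of_real 0)) F"
    unfolding q_def by (intro tendsto_intros assms(4))
  ultimately have "((\<lambda>x. q (of_real (h x))) \<longlongrightarrow> c m) F"
    by simp
  then have lim: "((\<lambda>x. w x * norm (q (of_real (h x)))) \<longlongrightarrow> 1 * norm (c m)) F"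
    by (intro tendsto_mult tendsto_norm assms(3))
  have "\<forall>\<^sub>F x in F. w x * norm (q (of_real (h x))) \<le> B x"
    using assms(6)
  proof eventually_elim
    case (elim x)
    then have pos: "0 < h x ^ m" by simp
    have "h x ^ m * (w x * norm (q (of_real (h x)))) = w x * norm (\<Sum>k=m..n. c k * of_real (h x) ^ k)"
      using elim by (simp add: factor norm_mult norm_power mult_ac)
    also have "\<dots> \<le> h x ^ m * B x"
      using elim by (simp add: mult.commute)
    finally show ?case
      using pos by (simp only: mult_le_cancel_left_pos)
  qed
  from tendsto_le[OF assms(2) assms(5) lim this] show ?thesis by simp
qed

text \<open>The factor 0 ^ (2 - m) makes the bound 0 for m = 1 and n/2 |A 0| for m = 2.\<close>

lemma cannot_be_trained_low_coeff:
  assumes "cannot_be_trained n A" and "1 \<le> m" "m \<le> 2" "m \<le> n"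
    and "\<forall>k\<in>{1..<m}. A k = 0"
  shows "cmod (overlap_coeff n A m) \<le> real n / 2 * cmod (A 0) * 0 ^ (2 - m)"
proof (rule norm_lowest_coeff_le)
  let ?B = "\<lambda>\<beta>. real n / 2 * cmod (A 0) * \<beta> ^ (2 - m)"
  have "((\<lambda>\<beta>::real. cos \<beta> ^ n) \<longlongrightarrow> cos 0 ^ n) (at_right 0)"
    by (intro tendsto_intros)
  then show "((\<lambda>\<beta>::real. cos \<beta> ^ n) \<longlongrightarrow> 1) (at_right 0)"
    by simp
  have "((\<lambda>\<beta>::real. tan \<beta>) \<longlongrightarrow> tan 0) (at_right 0)"
    by (intro tendsto_intros) simp
  then show "((tan :: real \<Rightarrow> real) \<longlongrightarrow> 0) (at_right 0)"
    by simp
  show "(?B \<longlongrightarrow> real n / 2 * cmod (A 0) * 0 ^ (2 - m)) (at_right 0)"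
    by (intro tendsto_intros)
  have tail: "(\<Sum>k=1..n. overlap_coeff n A k * z ^ k) = (\<Sum>k=m..n. overlap_coeff n A k * z ^ k)" for z
    using assms(2,5) by (intro sum.mono_neutral_right) (auto simp: overlap_coeff_def)
  show "\<forall>\<^sub>F \<beta> in at_right 0. 0 < tan \<beta> \<and>
      cos \<beta> ^ n * cmod (\<Sum>k=m..n. overlap_coeff n A k * of_real (tan \<beta>) ^ k) \<le> ?B \<beta> * tan \<beta> ^ m"
  proof (rule eventually_at_rightI[of 0 1])
    fix \<beta> :: real
    assume "\<beta> \<in> {0<..<1}"
    then have \<beta>: "0 < \<beta>" "\<beta> < pi/2"
      using pi_gt3 by auto
    have "cos \<beta> ^ n * cmod (\<Sum>k=m..n. overlap_coeff n A k * of_real (tan \<beta>) ^ k)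
        \<le> real n * \<beta>\<^sup>2 / 2 * cmod (A 0)"
      using cannot_be_trained_tail_bound[OF assms(1), of \<beta>] \<open>\<beta> \<in> {0<..<1}\<close>
      unfolding tail by simp
    also have "\<dots> = ?B \<beta> * \<beta> ^ m"
      using assms(3) by (simp add: power_add[symmetric])
    also have "\<dots> \<le> ?B \<beta> * tan \<beta> ^ m"
      using \<beta> by (intro mult_left_mono power_mono tan_ge_self) simp_all
    finally show "0 < tan \<beta> \<and>
        cos \<beta> ^ n * cmod (\<Sum>k=m..n. overlap_coeff n A k * of_real (tan \<beta>) ^ k) \<le> ?B \<beta> * tan \<beta> ^ m"
      using \<beta> tan_gt_zero by auto
  qed simp
qed (use assms in simp_all)

lemma le_sqrt_half_ratio_if_choose_two_bound:
  fixes a c :: real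
  assumes "2 \<le> n" and "a * sqrt (real (n choose 2)) \<le> real n / 2 * c"
  shows "a \<le> sqrt (real n / (2 * (real n - 1))) * c"
proof -
  let ?r = "sqrt (real n / (2 * (real n - 1)))" and ?s = "sqrt (real (n choose 2))"
  have choose_two: "real (n choose 2) = real n * (real n - 1) / 2"
    using assms(1) by (auto simp: choose_two field_char_0_class.of_nat_div mod_eq_0_iff_dvd of_nat_diff)
  have "real n / (2 * (real n - 1)) * (real (n choose 2)) = (real n / 2)\<^sup>2"
    using assms(1) unfolding choose_two by (simp add: field_simps power2_eq_square)
  then have rs: "?r * ?s = real n / 2"
    unfolding real_sqrt_mult[symmetric] by simp
  have "a * ?s \<le> (?r * ?s) * c"
    using assms(2) unfolding rs .
  also have "\<dots> = (?r * c) * ?s"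
    by (simp only: mult_ac)
  finally have "a * ?s \<le> (?r * c) * ?s" .
  moreover have "0 < ?s"
    using assms(1) choose_two by simp
  ultimately show ?thesis
    by (rule mult_right_le_imp_le)
qed

theorem proposition1:
  fixes n :: nat and A :: "nat \<Rightarrow> complex"
  assumes "n \<ge> 2"
    and "(\<Sum>k=0..n. (cmod (A k))\<^sup>2) = 1"
    and "cannot_be_trained n A"
  shows "A 1 = 0 \<and> cmod (A 2) \<le> sqrt (2 * real n / (real n - 1)) * cmod (A 0)"
proof -
  have "cmod (overlap_coeff n A 1) \<le> 0"
    using cannot_be_trained_low_coeff[OF assms(3), of 1] assms(1) by simp
  then have A1: "A 1 = 0"
    using assms(1) by (simp add: norm_overlap_coeff mult_le_0_iff)
  have "\<forall>k\<in>{1..<2}. A k = 0"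
    using A1 less_2_cases by fastforce
  then have "cmod (overlap_coeff n A 2) \<le> real n / 2 * cmod (A 0)"
    using cannot_be_trained_low_coeff[OF assms(3), of 2] assms(1) by simp
  then have "cmod (A 2) \<le> sqrt (real n / (2 * (real n - 1))) * cmod (A 0)"
    using assms(1) by (intro le_sqrt_half_ratio_if_choose_two_bound) (simp_all add: norm_overlap_coeff)
  also have "\<dots> \<le> sqrt (2 * real n / (real n - 1)) * cmod (A 0)"
    using assms(1) by (intro mult_right_mono real_sqrt_le_mono) (simp_all add: frac_le)
  finally show ?thesis
    using A1 by simp
qed

end
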